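(* Let $K$ be an oriented Legendrian knot and $(X,\ast,u,d)$ a finite block GL-rack, with blocks $A_1,\dots,A_n$ each of size $c$, induced GL-quandle $(\widetilde X,\tilde\ast,\tilde u,\tilde d)$ and projection $\pi\colon X\to\widetilde X$. If $\phi\in\operatorname{Hom}(\operatorname{GLR}(K),X)$ then $\pi\circ\phi\in\operatorname{Hom}(\operatorname{GLR}(K),\widetilde X)$. Furthermore, $$\operatorname{Col}_X(K)=\sum_{\psi\in\operatorname{Hom}(\operatorname{GLR}(K),\widetilde X)}|\operatorname{Lift}(\psi)|,$$ and for every such $\psi$, $|\operatorname{Lift}(\psi)|\in\{0,c\}$.
   Context: A rack is a set $X$ with a binary operation $\ast$ such that for every $y\in X$ the map $x\mapsto x\ast y$ is a bijection of $X$ and $(x\ast y)\ast z=(x\ast z)\ast(y\ast z)$ for all $x,y,z$. A GL-rack is a quadruple $(X,\ast,u,d)$ where $(X,\ast)$ is a rack and $u,d\colon X\to X$ are maps such that for all $x,y\in X$: $u(d(x\ast x))=d(u(x\ast x))=x$; $u(x\ast y)=u(x)\ast y$ and $d(x\ast y)=d(x)\ast y$; $x\ast u(y)=x\ast d(y)=x\ast y$. A GL-quandle is a GL-rack with $x\ast x=x$. Homomorphisms of GL-racks are maps preserving $\ast$, $u$, $d$. The diagonal map is $\Delta(x)=x\ast x$; for finite $X$ it is a bijection with $\Delta=(u\circ d)^{-1}$. A finite GL-rack is a block GL-rack if all cycles in the disjoint cycle decomposition $\Delta=\alpha_1\cdots\alpha_n$ (fixed points counted as $1$-cycles) have the same length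 $c$; the blocks are $A_i=\operatorname{supp}(\alpha_i)$. The induced GL-quandle is $\widetilde X=\{a_1,\dots,a_n\}$ with $\pi(A_i)=\{a_i\}$, $a_i\tilde\ast a_j=\pi(A_i\ast A_j)$, $\tilde u(a_i)=\pi(u(A_i))$, $\tilde d(a_i)=\pi(d(A_i))$ (these are well defined, each image being a single block). For $\psi\in\operatorname{Hom}(\operatorname{GLR}(K),\widetilde X)$, $\operatorname{Lift}(\psi)=\{\phi\in\operatorname{Hom}(\operatorname{GLR}(K),X):\pi\circ\phi=\psi\}$. Legendrian knots in $(\mathbb{R}^3,\xi_{\mathrm{std}})$ are represented by oriented front diagrams. The fundamental GL-rack $\operatorname{GLR}(K)$ is the GL-rack generated by the arcs of a front diagram $D$ of $K$ subject to: following the orientation through a cusp, the generator changes by $u$ (cusp traversed upward) or $d$ (traversed downward); at a crossing with over-arc $y$, the under-arc $x$ on the right of the oriented over-strand and the under-arc $z$ on its left satisfy $z=x\ast y$. For a finite GL-rack $Y$, $\operatorname{Col}_Y(K)=|\operatorname{Hom}(\operatorname{GLR}(K),Y)|$, the number of colorings of $D$ by $Y$ obeying these rules; it is a Legendrian isotopy invariant. *)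

theory Defs
  imports "HOL-Library.FuncSet"
begin

definition gl_rack :: "'a set \<Rightarrow> ('a \<Rightarrow> 'a \<Rightarrow> 'a) \<Rightarrow> ('a \<Rightarrow> 'a) \<Rightarrow> ('a \<Rightarrow> 'a) \<Rightarrow> bool" where
  "gl_rack X opr u d \<longleftrightarrow>
     (\<forall>x\<in>X. \<forall>y\<in>X. opr x y \<in> X) \<and> (\<forall>x\<in>X. u x \<in> X) \<and> (\<forall>x\<in>X. d x \<in> X) \<and>
     (\<forall>y\<in>X. bij_betw (\<lambda>x. opr x y) X X) \<and>
     (\<forall>x\<in>X. \<forall>y\<in>X. \<forall>z\<in>X. opr (opr x y) z = opr (opr x z) (opr y z)) \<and>
     (\<forall>x\<in>X. u (d (opr x x)) = x \<and> d (u (opr x x)) = x) \<and>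
     (\<forall>x\<in>X. \<forall>y\<in>X. u (opr x y) = opr (u x) y \<and> d (opr x y) = opr (d x) y) \<and>
     (\<forall>x\<in>X. \<forall>y\<in>X. opr x (u y) = opr x y \<and> opr x (d y) = opr x y)"

definition diag :: "('a \<Rightarrow> 'a \<Rightarrow> 'a) \<Rightarrow> 'a \<Rightarrow> 'a" where
  "diag opr x = opr x x"

definition block_of :: "('a \<Rightarrow> 'a \<Rightarrow> 'a) \<Rightarrow> 'a \<Rightarrow> 'a set" where
  "block_of opr x = {(diag opr ^^ k) x | k. True}"

definition blocks :: "'a set \<Rightarrow> ('a \<Rightarrow> 'a \<Rightarrow> 'a) \<Rightarrow> 'a set set" where
  "blocks X opr = block_of opr ` X"

definition block_gl_rack :: "'a set \<Rightarrow> ('a \<Rightarrow> 'a \<Rightarrow> 'a) \<Rightarrow> ('a \<Rightarrow> 'a) \<Rightarrow> ('a \<Rightarrow> 'a) \<Rightarrow> nat \<Rightarrow> bool" where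
  "block_gl_rack X opr u d c \<longleftrightarrow> gl_rack X opr u d \<and> finite X \<and>
      (\<forall>x\<in>X. card (block_of opr x) = c)"

text \<open>Induced GL-quandle: its elements are the blocks; the projection sends x to its block.
  Operations: A \<star> B = \<pi>(A*B), u(A) = \<pi>(u(A)), d(A) = \<pi>(d(A)), where \<pi>(S) is the
  (single) block containing the image set.\<close>

definition proj :: "('a \<Rightarrow> 'a \<Rightarrow> 'a) \<Rightarrow> 'a \<Rightarrow> 'a set" where
  "proj opr x = block_of opr x"

definition ind_op :: "('a \<Rightarrow> 'a \<Rightarrow> 'a) \<Rightarrow> 'a set \<Rightarrow> 'a set \<Rightarrow> 'a set" where
  "ind_op opr A B = (THE C. proj opr ` {opr a b | a b. a \<in> A \<and> b \<in> B} = {C})"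

definition ind_un :: "('a \<Rightarrow> 'a \<Rightarrow> 'a) \<Rightarrow> ('a \<Rightarrow> 'a) \<Rightarrow> 'a set \<Rightarrow> 'a set" where
  "ind_un opr f A = (THE C. proj opr ` (f ` A) = {C})"

text \<open>An oriented front diagram of a knot with m arcs is encoded by a list D of length m:
  the arcs are numbered 0,...,m-1 in the order met when following the orientation, and
  D!i describes how arc i passes to arc (i+1) mod m:
  \<^item> CuspUp / CuspDown: through a cusp traversed upward / downward;
  \<^item> UnderRL k: passing under the over-arc k from its right side to its left side;
  \<^item> UnderLR k: passing under the over-arc k from its left side to its right side.\<close>

datatype transition = CuspUp | CuspDown | UnderRL nat | UnderLR nat

definition front_wf :: "transition list \<Rightarrow> bool" where
  "front_wf D \<longleftrightarrow> D \<noteq> [] \<and>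
     (\<forall>i<length D. \<forall>k. (D!i = UnderRL k \<or> D!i = UnderLR k) \<longrightarrow> k < length D)"

definition coloring_ok :: "transition list \<Rightarrow> ('b \<Rightarrow> 'b \<Rightarrow> 'b) \<Rightarrow> ('b \<Rightarrow> 'b) \<Rightarrow> ('b \<Rightarrow> 'b)
    \<Rightarrow> (nat \<Rightarrow> 'b) \<Rightarrow> bool" where
  "coloring_ok D opr u d f \<longleftrightarrow>
     (\<forall>i<length D. let j = Suc i mod length D in
        (case D!i of
           CuspUp \<Rightarrow> f j = u (f i)
         | CuspDown \<Rightarrow> f j = d (f i)
         | UnderRL k \<Rightarrow> f j = opr (f i) (f k)
         | UnderLR k \<Rightarrow> f i = opr (f j) (f k)))"

text \<open>Hom(GLR(K), Y), identified with the set of colorings of the arcs by Y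
  (functions extensional outside the arc set).\<close>

definition Hom :: "transition list \<Rightarrow> 'b set \<Rightarrow> ('b \<Rightarrow> 'b \<Rightarrow> 'b) \<Rightarrow> ('b \<Rightarrow> 'b) \<Rightarrow> ('b \<Rightarrow> 'b)
    \<Rightarrow> (nat \<Rightarrow> 'b) set" where
  "Hom D Y opr u d = {f \<in> {..<length D} \<rightarrow>\<^sub>E Y. coloring_ok D opr u d f}"

definition Col :: "transition list \<Rightarrow> 'b set \<Rightarrow> ('b \<Rightarrow> 'b \<Rightarrow> 'b) \<Rightarrow> ('b \<Rightarrow> 'b) \<Rightarrow> ('b \<Rightarrow> 'b) \<Rightarrow> nat" where
  "Col D Y opr u d = card (Hom D Y opr u d)"

definition proj_hom :: "transition list \<Rightarrow> ('a \<Rightarrow> 'a \<Rightarrow> 'a) \<Rightarrow> (nat \<Rightarrow> 'a) \<Rightarrow> (nat \<Rightarrow> 'a set)" where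
  "proj_hom D opr \<phi> = restrict (proj opr \<circ> \<phi>) {..<length D}"

definition Lift :: "transition list \<Rightarrow> 'a set \<Rightarrow> ('a \<Rightarrow> 'a \<Rightarrow> 'a) \<Rightarrow> ('a \<Rightarrow> 'a) \<Rightarrow> ('a \<Rightarrow> 'a)
    \<Rightarrow> (nat \<Rightarrow> 'a set) \<Rightarrow> (nat \<Rightarrow> 'a) set" where
  "Lift D X opr u d \<psi> = {\<phi> \<in> Hom D X opr u d. proj_hom D opr \<phi> = \<psi>}"

end

(*
  The diagonal map \<Delta> x = x * x is a GL-rack endomorphism of X, and x * \<Delta> y = x * y, so
  right multiplication only depends on the block of the right factor. Hence the projection to
  the blocks is a homomorphism onto the induced GL-quandle, which gives the first claim, and
  the counting formula is the partition of the colourings into the fibres Lift(\<psi>). A lift is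
  determined by its colour on one arc: walking along the diagram, the next colour is forced,
  because right multiplication is injective and only sees blocks. Composing a lift with the
  powers of \<Delta> realises every element of the block on that arc, so a nonempty Lift(\<psi>) is in
  bijection with a block and has c elements.
*)
theory Submission
  imports Defs
begin

lemma funpow_image_subset:
  assumes "f ` A \<subseteq> A"
  shows "(f ^^ n) ` A \<subseteq> A"
  by (induction n) (use assms in auto)

lemma inj_on_funpow:
  assumes "inj_on f A" and "f ` A \<subseteq> A"
  shows "inj_on (f ^^ n) A"
proof (induction n)
  case (Suc n)
  have "inj_on (f ^^ n) (f ` A)"
    using Suc.IH assms(2) by (rule inj_on_subset)
  then show ?case
    unfolding funpow_Suc_right using assms(1) by (rule comp_inj_on[rotated])
qed simp

lemma funpow_periodic_on:
  assumes "finite A" and "inj_on f A" and "f ` A \<subseteq> A" and "x \<in> A"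
  obtains p where "p > 0" and "(f ^^ p) x = x"
proof -
  have "range (\<lambda>k. (f ^^ k) x) \<subseteq> A"
    using funpow_image_subset[OF assms(3)] assms(4) by blast
  then have "\<not> inj (\<lambda>k. (f ^^ k) x)"
    using assms(1) finite_imageD finite_subset by blast
  then obtain i j where "i < j" and ij: "(f ^^ i) x = (f ^^ j) x"
    unfolding inj_def by (metis linorder_neqE_nat)
  have "(f ^^ i) ((f ^^ (j - i)) x) = (f ^^ i) x"
    using ij \<open>i < j\<close> by (simp flip: funpow_add comp_apply[of "f ^^ i" "f ^^ (j - i)"])
  moreover have "(f ^^ (j - i)) x \<in> A"
    using funpow_image_subset[OF assms(3)] assms(4) by blast
  ultimately have "(f ^^ (j - i)) x = x"
    using inj_onD[OF inj_on_funpow[OF assms(2,3)]] assms(4) by blast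
  with \<open>i < j\<close> show thesis
    using that[of "j - i"] by simp
qed

lemma card_eq_sum_card_fibres:
  assumes "finite A" and "finite B" and "f ` A \<subseteq> B"
  shows "card A = (\<Sum>b\<in>B. card {a \<in> A. f a = b})"
  using sum.group[OF assms, of "\<lambda>_. 1::nat"] by simp

definition gl_hom :: "'a set \<Rightarrow> ('a \<Rightarrow> 'a \<Rightarrow> 'a) \<Rightarrow> ('a \<Rightarrow> 'a) \<Rightarrow> ('a \<Rightarrow> 'a)
    \<Rightarrow> ('b \<Rightarrow> 'b \<Rightarrow> 'b) \<Rightarrow> ('b \<Rightarrow> 'b) \<Rightarrow> ('b \<Rightarrow> 'b) \<Rightarrow> ('a \<Rightarrow> 'b) \<Rightarrow> bool" where
  "gl_hom X opr u d opr' u' d' h \<longleftrightarrow>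
     (\<forall>x\<in>X. \<forall>y\<in>X. h (opr x y) = opr' (h x) (h y)) \<and>
     (\<forall>x\<in>X. h (u x) = u' (h x) \<and> h (d x) = d' (h x))"

lemma gl_hom_funpow:
  assumes "gl_hom X opr u d opr u d h" and "h ` X \<subseteq> X"
  shows "gl_hom X opr u d opr u d (h ^^ n)"
proof (induction n)
  case (Suc n)
  have "(h ^^ n) ` X \<subseteq> X"
    using assms(2) by (rule funpow_image_subset)
  with Suc.IH assms(1) show ?case
    unfolding gl_hom_def by (auto simp: image_subset_iff)
qed (simp add: gl_hom_def)

lemma front_wf_length_pos: "front_wf D \<Longrightarrow> 0 < length D"
  unfolding front_wf_def by blast

lemma front_wf_over_arc:
  assumes "front_wf D" and "i < length D" and "D ! i = UnderRL k \<or> D ! i = UnderLR k"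
  shows "k < length D"
  using assms unfolding front_wf_def by blast

lemma coloring_ok_arc:
  assumes "coloring_ok D opr u d f" and "i < length D"
  shows "case D ! i of
          CuspUp \<Rightarrow> f (Suc i mod length D) = u (f i)
        | CuspDown \<Rightarrow> f (Suc i mod length D) = d (f i)
        | UnderRL k \<Rightarrow> f (Suc i mod length D) = opr (f i) (f k)
        | UnderLR k \<Rightarrow> f i = opr (f (Suc i mod length D)) (f k)"
  using assms unfolding coloring_ok_def Let_def by blast

lemma Hom_closed: "f \<in> Hom D Y opr u d \<Longrightarrow> i < length D \<Longrightarrow> f i \<in> Y"
  unfolding Hom_def by auto

lemma Hom_coloring_ok: "f \<in> Hom D Y opr u d \<Longrightarrow> coloring_ok D opr u d f"
  unfolding Hom_def by blast

lemma finite_Hom: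
  assumes "finite Y"
  shows "finite (Hom D Y opr u d)"
proof (rule finite_subset)
  show "Hom D Y opr u d \<subseteq> {..<length D} \<rightarrow>\<^sub>E Y"
    unfolding Hom_def by blast
  show "finite ({..<length D} \<rightarrow>\<^sub>E Y)"
    using assms by (simp add: finite_PiE)
qed

lemma Hom_gl_hom_comp:
  assumes wf: "front_wf D" and h: "gl_hom X opr u d opr' u' d' h" and hY: "h ` X \<subseteq> Y"
    and f: "f \<in> Hom D X opr u d"
  shows "restrict (h \<circ> f) {..<length D} \<in> Hom D Y opr' u' d'"
proof -
  have fX: "f i \<in> X" if "i < length D" for i
    using f that by (rule Hom_closed)
  let ?g = "restrict (h \<circ> f) {..<length D}"
  have "coloring_ok D opr' u' d' ?g"
    unfolding coloring_ok_def Let_def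
  proof (intro allI impI)
    fix i assume i: "i < length D"
    have j: "Suc i mod length D < length D"
      using front_wf_length_pos[OF wf] by simp
    note arc = coloring_ok_arc[OF Hom_coloring_ok[OF f] i]
    show "case D ! i of
          CuspUp \<Rightarrow> ?g (Suc i mod length D) = u' (?g i)
        | CuspDown \<Rightarrow> ?g (Suc i mod length D) = d' (?g i)
        | UnderRL k \<Rightarrow> ?g (Suc i mod length D) = opr' (?g i) (?g k)
        | UnderLR k \<Rightarrow> ?g i = opr' (?g (Suc i mod length D)) (?g k)"
    proof (cases "D ! i")
      case (UnderRL k)
      then have "k < length D"
        using front_wf_over_arc[OF wf i] by blast
      with UnderRL arc i j h fX[OF i] fX[OF \<open>k < length D\<close>] show ?thesis
        unfolding gl_hom_def by simp
    next
      case (UnderLR k)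
      then have "k < length D"
        using front_wf_over_arc[OF wf i] by blast
      with UnderLR arc i j h fX[OF j] fX[OF \<open>k < length D\<close>] show ?thesis
        unfolding gl_hom_def by simp
    qed (use arc i j h fX[OF i] in \<open>simp_all add: gl_hom_def\<close>)
  qed
  then show ?thesis
    using f hY fX unfolding Hom_def by auto
qed

lemma funpow_diag_in_block_of: "(diag opr ^^ k) x \<in> block_of opr x"
  unfolding block_of_def by blast

lemma self_in_block_of: "x \<in> block_of opr x"
  using funpow_diag_in_block_of[of 0] by simp

lemma block_of_subset:
  assumes "y \<in> block_of opr x"
  shows "block_of opr y \<subseteq> block_of opr x"
proof
  fix z assume "z \<in> block_of opr y"
  then obtain m where "z = (diag opr ^^ m) y"
    unfolding block_of_def by blast
  moreover obtain n where "y = (diag opr ^^ n) x"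
    using assms unfolding block_of_def by blast
  ultimately have "z = (diag opr ^^ (m + n)) x"
    by (simp add: funpow_add)
  then show "z \<in> block_of opr x"
    by (simp add: funpow_diag_in_block_of)
qed

locale gl_rack_on =
  fixes X :: "'a set" and opr :: "'a \<Rightarrow> 'a \<Rightarrow> 'a" and u d :: "'a \<Rightarrow> 'a"
  assumes gl_rack: "gl_rack X opr u d"
begin

lemma opr_closed: "x \<in> X \<Longrightarrow> y \<in> X \<Longrightarrow> opr x y \<in> X"
  and u_closed: "x \<in> X \<Longrightarrow> u x \<in> X"
  and d_closed: "x \<in> X \<Longrightarrow> d x \<in> X"
  and inj_on_opr_right: "y \<in> X \<Longrightarrow> inj_on (\<lambda>x. opr x y) X"
  and self_distrib: "x \<in> X \<Longrightarrow> y \<in> X \<Longrightarrow> z \<in> X \<Longrightarrow> opr (opr x y) z = opr (opr x z) (opr y z)"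
  and u_d_diag: "x \<in> X \<Longrightarrow> u (d (diag opr x)) = x"
  and u_opr: "x \<in> X \<Longrightarrow> y \<in> X \<Longrightarrow> u (opr x y) = opr (u x) y"
  and d_opr: "x \<in> X \<Longrightarrow> y \<in> X \<Longrightarrow> d (opr x y) = opr (d x) y"
  and opr_u: "x \<in> X \<Longrightarrow> y \<in> X \<Longrightarrow> opr x (u y) = opr x y"
  and opr_d: "x \<in> X \<Longrightarrow> y \<in> X \<Longrightarrow> opr x (d y) = opr x y"
  using gl_rack unfolding gl_rack_def diag_def bij_betw_def by blast+

lemma diag_closed: "x \<in> X \<Longrightarrow> diag opr x \<in> X"
  unfolding diag_def by (rule opr_closed)

lemma diag_image_subset: "diag opr ` X \<subseteq> X"
  using diag_closed by blast

lemma funpow_diag_closed: "x \<in> X \<Longrightarrow> (diag opr ^^ k) x \<in> X"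
  using funpow_image_subset[OF diag_image_subset] by blast

lemma inj_on_diag: "inj_on (diag opr) X"
  by (rule inj_on_inverseI[where g = "u \<circ> d"]) (simp add: u_d_diag)

lemma opr_diag_right:
  assumes "x \<in> X" and "y \<in> X"
  shows "opr x (diag opr y) = opr x y"
proof -
  have "opr x (diag opr y) = opr x (d (diag opr y))"
    using assms by (simp add: opr_d diag_closed)
  also have "\<dots> = opr x (u (d (diag opr y)))"
    using assms by (simp add: opr_u d_closed diag_closed)
  finally show ?thesis
    using assms(2) by (simp add: u_d_diag)
qed

lemma opr_funpow_diag_right:
  assumes "x \<in> X" and "y \<in> X"
  shows "opr x ((diag opr ^^ k) y) = opr x y"
  by (induction k) (simp_all add: assms opr_diag_right funpow_diag_closed)

lemma diag_opr:
  assumes "x \<in> X" and "y \<in> X"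
  shows "diag opr (opr x y) = opr (diag opr x) (diag opr y)"
proof -
  have "diag opr (opr x y) = opr (diag opr x) y"
    using assms by (simp add: diag_def self_distrib)
  then show ?thesis
    using assms by (simp add: opr_diag_right diag_closed)
qed

lemma diag_gl_hom: "gl_hom X opr u d opr u d (diag opr)"
  unfolding gl_hom_def
  by (simp add: diag_opr) (simp add: diag_def u_opr d_opr opr_u opr_d u_closed d_closed)

lemma funpow_diag_gl_hom: "gl_hom X opr u d opr u d (diag opr ^^ k)"
  using diag_gl_hom diag_image_subset by (rule gl_hom_funpow)

lemma opr_right_block_of:
  assumes "x \<in> X" and "b \<in> X" and "a \<in> block_of opr b"
  shows "opr x a = opr x b"
proof -
  obtain m where "a = (diag opr ^^ m) b"
    using assms(3) unfolding block_of_def by blast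
  then show ?thesis
    using assms(1,2) by (simp add: opr_funpow_diag_right)
qed

lemma Hom_eq_if_block_of_eq:
  assumes wf: "front_wf D" and f: "f \<in> Hom D X opr u d" and g: "g \<in> Hom D X opr u d"
    and same_blocks: "\<And>i. i < length D \<Longrightarrow> block_of opr (f i) = block_of opr (g i)"
    and "f 0 = g 0"
  shows "f = g"
proof -
  have same_right: "opr x (f k) = opr x (g k)" if "x \<in> X" and "k < length D" for x k
    using opr_right_block_of[OF that(1) Hom_closed[OF g that(2)]]
      self_in_block_of[of "f k" opr] same_blocks[OF that(2)] by simp
  have "f i = g i" if "i < length D" for i
    using that
  proof (induction i)
    case 0
    show ?case by fact
  next
    case (Suc i)
    then have i: "i < length D" and IH: "f i = g i"
      by simp_all
    have succ: "Suc i mod length D = Suc i"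
      using Suc.prems by simp
    note arc_f = coloring_ok_arc[OF Hom_coloring_ok[OF f] i, unfolded succ]
    note arc_g = coloring_ok_arc[OF Hom_coloring_ok[OF g] i, unfolded succ]
    show ?case
    proof (cases "D ! i")
      case (UnderRL k)
      then have "k < length D"
        using front_wf_over_arc[OF wf i] by blast
      with UnderRL arc_f arc_g IH same_right[OF Hom_closed[OF g i]] show ?thesis
        by simp
    next
      case (UnderLR k)
      then have "k < length D"
        using front_wf_over_arc[OF wf i] by blast
      with UnderLR arc_f arc_g IH same_right[OF Hom_closed[OF f Suc.prems]]
      have "opr (f (Suc i)) (g k) = opr (g (Suc i)) (g k)"
        by simp
      then show ?thesis
        using inj_on_opr_right[OF Hom_closed[OF g \<open>k < length D\<close>]]
          Hom_closed[OF f Suc.prems] Hom_closed[OF g Suc.prems] by (auto dest: inj_onD)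
    qed (use arc_f arc_g IH in simp_all)
  qed
  then show ?thesis
    using f g unfolding Hom_def by (blast intro: PiE_ext)
qed

end

lemma Lift_block_of:
  assumes "f \<in> Lift D X opr u d \<psi>" and "g \<in> Lift D X opr u d \<psi>" and "i < length D"
  shows "block_of opr (f i) = block_of opr (g i)"
proof -
  have "proj_hom D opr f i = proj_hom D opr g i"
    using assms(1,2) unfolding Lift_def by simp
  then show ?thesis
    using assms(3) unfolding proj_hom_def proj_def by simp
qed

locale finite_gl_rack = gl_rack_on +
  assumes finite: "finite X"
begin

lemma block_of_funpow_diag:
  assumes "x \<in> X"
  shows "block_of opr ((diag opr ^^ k) x) = block_of opr x"
proof
  show "block_of opr ((diag opr ^^ k) x) \<subseteq> block_of opr x"
    by (rule block_of_subset[OF funpow_diag_in_block_of])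
  obtain p where "0 < p" and p: "(diag opr ^^ p) x = x"
    using funpow_periodic_on[OF finite inj_on_diag diag_image_subset assms] .
  then have "k * p - k + k = k * p"
    by simp
  then have "(diag opr ^^ (k * p - k)) ((diag opr ^^ k) x) = (diag opr ^^ (k * p)) x"
    by (metis comp_apply funpow_add)
  also have "\<dots> = x"
    using funpow_mod_eq[OF p, of "k * p"] by simp
  finally show "block_of opr x \<subseteq> block_of opr ((diag opr ^^ k) x)"
    by (metis block_of_subset funpow_diag_in_block_of)
qed

lemma ind_op_block_of:
  assumes x: "x \<in> X" and y: "y \<in> X"
  shows "ind_op opr (block_of opr x) (block_of opr y) = block_of opr (opr x y)"
proof -
  have "proj opr ` {opr a b | a b. a \<in> block_of opr x \<and> b \<in> block_of opr y}
      = {block_of opr (opr x y)}"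
  proof (intro equalityI subsetI)
    fix B assume "B \<in> proj opr ` {opr a b | a b. a \<in> block_of opr x \<and> b \<in> block_of opr y}"
    then obtain k b where "B = block_of opr (opr ((diag opr ^^ k) x) b)" and "b \<in> block_of opr y"
      unfolding proj_def block_of_def[of opr x] by blast
    then have "B = block_of opr ((diag opr ^^ k) (opr x y))"
      using funpow_diag_gl_hom x y
      by (simp add: gl_hom_def opr_right_block_of funpow_diag_closed opr_funpow_diag_right)
    then show "B \<in> {block_of opr (opr x y)}"
      by (simp add: block_of_funpow_diag opr_closed x y)
  qed (use self_in_block_of[of x opr] self_in_block_of[of y opr] in \<open>auto simp: proj_def\<close>)
  then show ?thesis
    unfolding ind_op_def by simp
qed

lemma ind_un_block_of:
  assumes "x \<in> X" and "h x \<in> X" and commute: "\<And>k. (diag opr ^^ k) (h x) = h ((diag opr ^^ k) x)"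
  shows "ind_un opr h (block_of opr x) = block_of opr (h x)"
proof -
  have "proj opr ` h ` block_of opr x = {block_of opr (h x)}"
  proof (intro equalityI subsetI)
    fix B assume "B \<in> proj opr ` h ` block_of opr x"
    then obtain k where "B = block_of opr (h ((diag opr ^^ k) x))"
      unfolding proj_def block_of_def[of opr x] by blast
    then show "B \<in> {block_of opr (h x)}"
      by (simp flip: commute add: block_of_funpow_diag assms(2))
  qed (use self_in_block_of[of x opr] in \<open>auto simp: proj_def\<close>)
  then show ?thesis
    unfolding ind_un_def by simp
qed

lemma proj_gl_hom: "gl_hom X opr u d (ind_op opr) (ind_un opr u) (ind_un opr d) (proj opr)"
proof -
  have "(diag opr ^^ k) (u x) = u ((diag opr ^^ k) x)" "(diag opr ^^ k) (d x) = d ((diag opr ^^ k) x)"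
    if "x \<in> X" for x k
    using funpow_diag_gl_hom that unfolding gl_hom_def by blast+
  then show ?thesis
    unfolding gl_hom_def proj_def
    by (simp add: ind_op_block_of ind_un_block_of u_closed d_closed)
qed

lemma proj_hom_in_Hom:
  assumes "front_wf D" and "\<phi> \<in> Hom D X opr u d"
  shows "proj_hom D opr \<phi> \<in> Hom D (blocks X opr) (ind_op opr) (ind_un opr u) (ind_un opr d)"
proof -
  have "proj opr ` X \<subseteq> blocks X opr"
    unfolding proj_def blocks_def by simp
  with assms show ?thesis
    unfolding proj_hom_def by (blast intro: Hom_gl_hom_comp proj_gl_hom)
qed

lemma funpow_diag_comp_in_Lift:
  assumes wf: "front_wf D" and \<phi>: "\<phi> \<in> Lift D X opr u d \<psi>"
  shows "restrict (diag opr ^^ k \<circ> \<phi>) {..<length D} \<in> Lift D X opr u d \<psi>"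
proof -
  have \<phi>_Hom: "\<phi> \<in> Hom D X opr u d" and \<psi>: "proj_hom D opr \<phi> = \<psi>"
    using \<phi> unfolding Lift_def by auto
  have "restrict (diag opr ^^ k \<circ> \<phi>) {..<length D} \<in> Hom D X opr u d"
    using Hom_gl_hom_comp[OF wf funpow_diag_gl_hom funpow_image_subset[OF diag_image_subset] \<phi>_Hom] .
  moreover have "proj_hom D opr (restrict (diag opr ^^ k \<circ> \<phi>) {..<length D}) = \<psi>"
    using \<psi> Hom_closed[OF \<phi>_Hom]
    unfolding proj_hom_def proj_def by (auto intro!: restrict_ext simp: block_of_funpow_diag)
  ultimately show ?thesis
    unfolding Lift_def by blast
qed

lemma card_Lift:
  assumes wf: "front_wf D" and \<phi>: "\<phi> \<in> Lift D X opr u d \<psi>"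
  shows "card (Lift D X opr u d \<psi>) = card (block_of opr (\<phi> 0))"
proof -
  have len: "0 < length D"
    using wf by (rule front_wf_length_pos)
  have "bij_betw (\<lambda>f. f 0) (Lift D X opr u d \<psi>) (block_of opr (\<phi> 0))"
  proof (rule bij_betw_imageI)
    show "inj_on (\<lambda>f. f 0) (Lift D X opr u d \<psi>)"
    proof (rule inj_onI)
      fix f g assume f: "f \<in> Lift D X opr u d \<psi>" and g: "g \<in> Lift D X opr u d \<psi>" and "f 0 = g 0"
      moreover have "f \<in> Hom D X opr u d" and "g \<in> Hom D X opr u d"
        using f g unfolding Lift_def by auto
      ultimately show "f = g"
        using Hom_eq_if_block_of_eq[OF wf] Lift_block_of[OF f g] by blast
    qed
    show "(\<lambda>f. f 0) ` Lift D X opr u d \<psi> = block_of opr (\<phi> 0)"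
    proof (intro equalityI subsetI)
      fix y assume "y \<in> (\<lambda>f. f 0) ` Lift D X opr u d \<psi>"
      then show "y \<in> block_of opr (\<phi> 0)"
        using Lift_block_of[OF _ \<phi> len] self_in_block_of by fastforce
    next
      fix y assume "y \<in> block_of opr (\<phi> 0)"
      then obtain k where "y = (diag opr ^^ k) (\<phi> 0)"
        unfolding block_of_def by blast
      then have "y = restrict (diag opr ^^ k \<circ> \<phi>) {..<length D} 0"
        using len by simp
      then show "y \<in> (\<lambda>f. f 0) ` Lift D X opr u d \<psi>"
        using funpow_diag_comp_in_Lift[OF wf \<phi>] by blast
    qed
  qed
  then show ?thesis
    by (rule bij_betw_same_card)
qed

end

theorem theorem3p11:
  fixes D :: "transition list"
    and X :: "'a set" and opr :: "'a \<Rightarrow> 'a \<Rightarrow> 'a" and u d :: "'a \<Rightarrow> 'a" and c :: nat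
  assumes "front_wf D"
    and "block_gl_rack X opr u d c"
  shows "(\<forall>\<phi>\<in>Hom D X opr u d.
            proj_hom D opr \<phi> \<in> Hom D (blocks X opr) (ind_op opr) (ind_un opr u) (ind_un opr d))
       \<and> Col D X opr u d =
           (\<Sum>\<psi>\<in>Hom D (blocks X opr) (ind_op opr) (ind_un opr u) (ind_un opr d).
               card (Lift D X opr u d \<psi>))
       \<and> (\<forall>\<psi>\<in>Hom D (blocks X opr) (ind_op opr) (ind_un opr u) (ind_un opr d).
               card (Lift D X opr u d \<psi>) \<in> {0, c})"
proof -
  interpret finite_gl_rack X opr u d
    using assms(2) unfolding block_gl_rack_def by unfold_locales blast+
  have block_size: "card (block_of opr x) = c" if "x \<in> X" for x
    using assms(2) that unfolding block_gl_rack_def by blast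
  let ?H = "Hom D (blocks X opr) (ind_op opr) (ind_un opr u) (ind_un opr d)"
  have proj: "\<forall>\<phi>\<in>Hom D X opr u d. proj_hom D opr \<phi> \<in> ?H"
    using proj_hom_in_Hom[OF assms(1)] by blast
  moreover have "Col D X opr u d = (\<Sum>\<psi>\<in>?H. card (Lift D X opr u d \<psi>))"
    using card_eq_sum_card_fibres[OF finite_Hom[OF finite] finite_Hom, of "blocks X opr"] proj finite
    unfolding Col_def Lift_def blocks_def by blast
  moreover have "card (Lift D X opr u d \<psi>) \<in> {0, c}" for \<psi>
  proof (cases "Lift D X opr u d \<psi> = {}")
    case False
    then obtain \<phi> where \<phi>: "\<phi> \<in> Lift D X opr u d \<psi>"
      by blast
    then have "\<phi> 0 \<in> X"
      using Hom_closed front_wf_length_pos[OF assms(1)] unfolding Lift_def by blast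
    then show ?thesis
      using card_Lift[OF assms(1) \<phi>] block_size by simp
  qed simp
  ultimately show ?thesis
    by blast
qed

end
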